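(* If $(E,\mathcal L)$ is an exact local representation over an infinite set $B$, then $|E|\ge 2^{2^{|B|}}$.
   Context: A local representation over a set $B$ is a pair $(E,\mathcal L)$ with $\mathcal L$ an ultrafilter on the cylinder Boolean algebra of $B^E$ (sets $\{\psi\in B^E:(\psi_{e_1},\dots,\psi_{e_n})\in R\}$, $e_i\in E$, $R\subseteq B^n$). Separated: $\{\psi:\psi_{e_1}=\psi_{e_2}\}\in\mathcal L$ only if $e_1=e_2$. For $\eta:I\to E$, the pullback of $\mathcal L$ by $\eta$ is the ultrafilter of cylinders $C\subseteq B^I$ with $\{\psi:(\psi_{\eta(i)})_{i\in I}\in C\}\in\mathcal L$; projection to $B^I$ of an ultrafilter on the cylinders of $B^{I\cup\{i_0\}}$ ($i_0\notin I$) consists of the cylinders of $B^I$ whose preimage under restriction lies in it. $(E,\mathcal L)$ is exact if it is separated and for every finite $I$, $i_0\notin I$, $\eta:I\to E$, and ultrafilter $\mathcal U$ on $\mathcal P(B^{I\cup\{i_0\}})$ projecting to the pullback of $\mathcal L$ by $\eta$, there is $e\in E$ with the pullback of $\mathcal L$ by $\eta\cup\{i_0\mapsto e\}$ equal to $\mathcal U$ (in particular, with $I=\emptyset$: every ultrafilter $\mathcal U$ on $B$ equals $\{S\subseteq B:\{\psi:\psi_e\in S\}\in\mathcal L\}$ for some $e\in E$). *)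

theory Defs
  imports "HOL-Library.FuncSet"
begin

text \<open>The power B^E is modelled as the extensional function space PiE E (\<lambda>_. B).\<close>

definition cylinders :: "'e set \<Rightarrow> 'b set \<Rightarrow> ('e \<Rightarrow> 'b) set set" where
  "cylinders E B = {{\<psi> \<in> PiE E (\<lambda>_. B). map \<psi> es \<in> R} | es R.
      set es \<subseteq> E \<and> R \<subseteq> {xs. length xs = length es \<and> set xs \<subseteq> B}}"

definition ultrafilter_on :: "'a set \<Rightarrow> 'a set set \<Rightarrow> 'a set set \<Rightarrow> bool" where
  "ultrafilter_on X A U \<longleftrightarrow>
     U \<subseteq> A \<and> X \<in> U \<and> {} \<notin> U \<and>
     (\<forall>S\<in>U. \<forall>T\<in>U. S \<inter> T \<in> U) \<and>
     (\<forall>S\<in>U. \<forall>T\<in>A. S \<subseteq> T \<longrightarrow> T \<in> U) \<and>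
     (\<forall>S\<in>A. S \<in> U \<or> X - S \<in> U)"

definition local_representation :: "'b set \<Rightarrow> 'e set \<Rightarrow> ('e \<Rightarrow> 'b) set set \<Rightarrow> bool" where
  "local_representation B E L \<longleftrightarrow> ultrafilter_on (PiE E (\<lambda>_. B)) (cylinders E B) L"

definition separated :: "'b set \<Rightarrow> 'e set \<Rightarrow> ('e \<Rightarrow> 'b) set set \<Rightarrow> bool" where
  "separated B E L \<longleftrightarrow>
     (\<forall>e1\<in>E. \<forall>e2\<in>E. {\<psi> \<in> PiE E (\<lambda>_. B). \<psi> e1 = \<psi> e2} \<in> L \<longrightarrow> e1 = e2)"

definition pullback :: "'b set \<Rightarrow> 'e set \<Rightarrow> ('e \<Rightarrow> 'b) set set \<Rightarrow> 'i set \<Rightarrow> ('i \<Rightarrow> 'e)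
    \<Rightarrow> ('i \<Rightarrow> 'b) set set" where
  "pullback B E L I \<eta> =
     {C \<in> cylinders I B. {\<psi> \<in> PiE E (\<lambda>_. B). restrict (\<lambda>i. \<psi> (\<eta> i)) I \<in> C} \<in> L}"

definition projection :: "'b set \<Rightarrow> 'i set \<Rightarrow> 'i \<Rightarrow> ('i \<Rightarrow> 'b) set set \<Rightarrow> ('i \<Rightarrow> 'b) set set" where
  "projection B I i0 U =
     {C \<in> cylinders I B. {\<psi> \<in> PiE (insert i0 I) (\<lambda>_. B). restrict \<psi> I \<in> C} \<in> U}"

text \<open>Exactness. Finite index sets I are taken as finite sets of natural numbers
  (every finite index set is in bijection with one).\<close>
definition exact_rep :: "'b set \<Rightarrow> 'e set \<Rightarrow> ('e \<Rightarrow> 'b) set set \<Rightarrow> bool" where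
  "exact_rep B E L \<longleftrightarrow> local_representation B E L \<and> separated B E L \<and>
     (\<forall>(I::nat set) i0 (\<eta>::nat \<Rightarrow> 'e) U.
        finite I \<longrightarrow> i0 \<notin> I \<longrightarrow> \<eta> ` I \<subseteq> E \<longrightarrow>
        ultrafilter_on (PiE (insert i0 I) (\<lambda>_. B)) (Pow (PiE (insert i0 I) (\<lambda>_. B))) U \<longrightarrow>
        projection B I i0 U = pullback B E L I \<eta> \<longrightarrow>
        (\<exists>e\<in>E. pullback B E L (insert i0 I) (\<eta>(i0 := e)) = U))"

end

theory Submission
  imports Defs "HOL-Algebra.Free_Abelian_Groups" (* for eqpoll_Fpow *)
begin

text \<open>Pospisil: an infinite set B carries 2^2^|B| ultrafilters. On the set of pairs (F, \<Phi>) with F a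
  finite subset of B and \<Phi> \<subseteq> Pow F, which has the cardinality of B, the sets
  {(F, \<Phi>). A \<inter> F \<in> \<Phi>} for A \<subseteq> B form an independent family, so every prescription of which of
  them or of their complements to contain extends to an ultrafilter. Exactness for I = {} says that
  every ultrafilter on B \<cong> B^{i0} is the pullback of L along some e \<in> E, so E maps onto the
  ultrafilters on B.\<close>

definition finite_intersection_property :: "'a set \<Rightarrow> 'a set set \<Rightarrow> bool" where
  "finite_intersection_property Y H \<longleftrightarrow> (\<forall>F. finite F \<longrightarrow> F \<subseteq> H \<longrightarrow> Y \<inter> \<Inter>F \<noteq> {})"

definition ultrafilters :: "'a set \<Rightarrow> 'a set set set" where
  "ultrafilters X = {U. ultrafilter_on X (Pow X) U}"

lemma finite_intersection_propertyD:
  "finite_intersection_property Y H \<Longrightarrow> finite F \<Longrightarrow> F \<subseteq> H \<Longrightarrow> Y \<inter> \<Inter>F \<noteq> {}"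
  unfolding finite_intersection_property_def by blast

lemma finite_intersection_property_insert_compl:
  assumes "finite_intersection_property Y M" "\<not> finite_intersection_property Y (insert S M)"
  shows "finite_intersection_property Y (insert (Y - S) M)"
proof -
  obtain F1 where F1: "finite F1" "F1 \<subseteq> insert S M" "Y \<inter> \<Inter>F1 = {}"
    using assms(2) unfolding finite_intersection_property_def by blast
  show ?thesis
    unfolding finite_intersection_property_def
  proof (intro allI impI)
    fix F2 assume F2: "finite F2" "F2 \<subseteq> insert (Y - S) M"
    let ?G = "(F1 - {S}) \<union> (F2 - {Y - S})"
    have "finite ?G" using F1(1) F2(1) by simp
    moreover have "?G \<subseteq> M" using F1(2) F2(2) by blast
    ultimately have "Y \<inter> \<Inter>?G \<noteq> {}" by (rule finite_intersection_propertyD[OF assms(1)])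
    then obtain y where y: "y \<in> Y \<inter> \<Inter>?G" by (metis equals0I)
    have "y \<notin> S"
    proof
      assume "y \<in> S"
      then have "y \<in> Y \<inter> \<Inter>F1" using y by blast
      then show False using F1(3) by (metis empty_iff)
    qed
    then have "y \<in> Y \<inter> \<Inter>F2" using y by blast
    then show "Y \<inter> \<Inter>F2 \<noteq> {}" by (metis empty_iff)
  qed
qed

lemma finite_intersection_property_insert_superset:
  assumes "finite_intersection_property Y M" "finite F0" "F0 \<subseteq> M" "Y \<inter> \<Inter>F0 \<subseteq> S"
  shows "finite_intersection_property Y (insert S M)"
  unfolding finite_intersection_property_def
proof (intro allI impI)
  fix F assume "finite F" "F \<subseteq> insert S M"
  then have "Y \<inter> \<Inter>(F0 \<union> (F - {S})) \<noteq> {}"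
    using assms(2,3) by (intro finite_intersection_propertyD[OF assms(1)]) auto
  moreover have "Y \<inter> \<Inter>(F0 \<union> (F - {S})) \<subseteq> Y \<inter> \<Inter>F" using assms(4) by blast
  ultimately show "Y \<inter> \<Inter>F \<noteq> {}" by blast
qed

lemma maximal_finite_intersection_property_ultrafilter:
  assumes "M \<subseteq> Pow Y" "finite_intersection_property Y M"
    and maximal: "\<And>S. S \<subseteq> Y \<Longrightarrow> finite_intersection_property Y (insert S M) \<Longrightarrow> S \<in> M"
  shows "ultrafilter_on Y (Pow Y) M"
proof -
  have superset: "S \<in> M" if "S \<subseteq> Y" "finite F0" "F0 \<subseteq> M" "Y \<inter> \<Inter>F0 \<subseteq> S" for S F0
    by (rule maximal[OF that(1) finite_intersection_property_insert_superset[OF assms(2) that(2-4)]])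
  have "Y \<in> M" by (rule superset[of Y "{}"]) simp_all
  moreover have "{} \<notin> M"
    using finite_intersection_propertyD[OF assms(2), of "{{}}"] by auto
  moreover have "S \<inter> T \<in> M" if "S \<in> M" "T \<in> M" for S T
    by (rule superset[of "S \<inter> T" "{S, T}"]) (use that assms(1) in auto)
  moreover have "T \<in> M" if "S \<in> M" "T \<subseteq> Y" "S \<subseteq> T" for S T
    by (rule superset[of T "{S}"]) (use that in auto)
  moreover have "S \<in> M \<or> Y - S \<in> M" if "S \<subseteq> Y" for S
    using finite_intersection_property_insert_compl[OF assms(2), of S] maximal[of S] maximal[of "Y - S"] that
    by blast
  ultimately show ?thesis using assms(1) unfolding ultrafilter_on_def by blast
qed

lemma finite_intersection_property_imp_ultrafilter:
  assumes "G \<subseteq> Pow Y" "finite_intersection_property Y G"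
  shows "\<exists>U \<in> ultrafilters Y. G \<subseteq> U"
proof -
  let ?A = "{H. G \<subseteq> H \<and> H \<subseteq> Pow Y \<and> finite_intersection_property Y H}"
  have "\<exists>M\<in>?A. \<forall>H\<in>?A. M \<subseteq> H \<longrightarrow> H = M"
  proof (rule subset_Zorn_nonempty)
    show "?A \<noteq> {}" using assms by blast
  next
    fix C assume C: "C \<noteq> {}" "subset.chain ?A C"
    have CA: "C \<subseteq> ?A" using C(2) unfolding subset.chain_def by (rule conjunct1)
    have "finite_intersection_property Y (\<Union>C)"
      unfolding finite_intersection_property_def
    proof (intro allI impI)
      fix F assume "finite F" "F \<subseteq> \<Union>C"
      then obtain H where H: "H \<in> C" "F \<subseteq> H" by (rule finite_subset_Union_chain[OF _ _ C])
      then have "finite_intersection_property Y H" using CA by blast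
      then show "Y \<inter> \<Inter>F \<noteq> {}" using \<open>finite F\<close> H(2) by (rule finite_intersection_propertyD)
    qed
    moreover have "G \<subseteq> \<Union>C" using CA C(1) by blast
    moreover have "\<Union>C \<subseteq> Pow Y" using CA by blast
    ultimately show "\<Union>C \<in> ?A" by simp
  qed
  then obtain M where M: "M \<in> ?A" and maximal: "\<forall>H\<in>?A. M \<subseteq> H \<longrightarrow> H = M" by blast
  have "ultrafilter_on Y (Pow Y) M"
  proof (rule maximal_finite_intersection_property_ultrafilter)
    show "S \<in> M" if "S \<subseteq> Y" "finite_intersection_property Y (insert S M)" for S
      using maximal[rule_format, of "insert S M"] M that by blast
  qed (use M in blast)+
  then show ?thesis using M unfolding ultrafilters_def by blast
qed

lemma ultrafilter_on_Diff_not_mem: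
  "ultrafilter_on X A U \<Longrightarrow> S \<in> U \<Longrightarrow> X - S \<notin> U"
  unfolding ultrafilter_on_def by (metis Diff_disjoint)

lemma independent_family_finite_intersection_property:
  assumes independent: "\<And>P N. finite P \<Longrightarrow> finite N \<Longrightarrow> P \<subseteq> J \<Longrightarrow> N \<subseteq> J \<Longrightarrow> P \<inter> N = {} \<Longrightarrow>
        \<exists>y\<in>Y. (\<forall>j\<in>P. y \<in> T j) \<and> (\<forall>j\<in>N. y \<notin> T j)"
    and "S \<subseteq> J"
  shows "finite_intersection_property Y (T ` S \<union> (\<lambda>j. Y - T j) ` (J - S))"
  unfolding finite_intersection_property_def
proof (intro allI impI)
  fix F assume F: "finite F" "F \<subseteq> T ` S \<union> (\<lambda>j. Y - T j) ` (J - S)"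
  have "finite (F \<inter> X)" for X using F(1) by simp
  then obtain P N where P: "P \<subseteq> S" "finite P" "F \<inter> T ` S = T ` P"
    and N: "N \<subseteq> J - S" "finite N" "F \<inter> (\<lambda>j. Y - T j) ` (J - S) = (\<lambda>j. Y - T j) ` N"
    using finite_subset_image[OF _ Int_lower2] by meson
  have "P \<subseteq> J" "N \<subseteq> J" "P \<inter> N = {}" using P(1) N(1) \<open>S \<subseteq> J\<close> by blast+
  then obtain y where "y \<in> Y" "\<forall>j\<in>P. y \<in> T j" "\<forall>j\<in>N. y \<notin> T j"
    using independent[OF P(2) N(2)] by blast
  then have "y \<in> Y \<inter> \<Inter>(T ` P \<union> (\<lambda>j. Y - T j) ` N)" by blast
  moreover have "F = (F \<inter> T ` S) \<union> (F \<inter> (\<lambda>j. Y - T j) ` (J - S))"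
    by (metis F(2) Int_Un_distrib Int_absorb2)
  ultimately have "y \<in> Y \<inter> \<Inter>F" unfolding P(3) N(3) by simp
  then show "Y \<inter> \<Inter>F \<noteq> {}" by (metis empty_iff)
qed

lemma independent_family_ultrafilters_lepoll:
  assumes T: "\<And>j. j \<in> J \<Longrightarrow> T j \<subseteq> Y"
    and independent: "\<And>P N. finite P \<Longrightarrow> finite N \<Longrightarrow> P \<subseteq> J \<Longrightarrow> N \<subseteq> J \<Longrightarrow> P \<inter> N = {} \<Longrightarrow>
        \<exists>y\<in>Y. (\<forall>j\<in>P. y \<in> T j) \<and> (\<forall>j\<in>N. y \<notin> T j)"
  shows "Pow J \<lesssim> ultrafilters Y"
proof -
  define G where "G S = T ` S \<union> (\<lambda>j. Y - T j) ` (J - S)" for S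
  have "\<exists>U \<in> ultrafilters Y. G S \<subseteq> U" if "S \<in> Pow J" for S
  proof (rule finite_intersection_property_imp_ultrafilter)
    show "G S \<subseteq> Pow Y" using T that unfolding G_def by blast
    show "finite_intersection_property Y (G S)"
      unfolding G_def using independent that by (intro independent_family_finite_intersection_property) auto
  qed
  then obtain h where h: "\<And>S. S \<in> Pow J \<Longrightarrow> h S \<in> ultrafilters Y \<and> G S \<subseteq> h S"
    by metis
  have separate: "h S \<noteq> h S'" if "S \<in> Pow J" "S' \<in> Pow J" "j \<in> S" "j \<notin> S'" for S S' j
  proof
    assume "h S = h S'"
    have "T j \<in> G S" "Y - T j \<in> G S'" using that unfolding G_def by auto
    then have "T j \<in> h S" "Y - T j \<in> h S" using h[OF that(1)] h[OF that(2)] \<open>h S = h S'\<close> by auto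
    then show False using h[OF that(1)] ultrafilter_on_Diff_not_mem unfolding ultrafilters_def by blast
  qed
  have "inj_on h (Pow J)"
  proof (rule inj_onI, rule ccontr)
    fix S S' assume "S \<in> Pow J" "S' \<in> Pow J" "h S = h S'" "S \<noteq> S'"
    then obtain j where "j \<in> S \<and> j \<notin> S' \<or> j \<in> S' \<and> j \<notin> S" by blast
    then show False using separate \<open>S \<in> Pow J\<close> \<open>S' \<in> Pow J\<close> \<open>h S = h S'\<close> by metis
  qed
  then show ?thesis unfolding lepoll_def using h by blast
qed

lemma finite_set_separating_traces:
  assumes "finite Q"
  shows "\<exists>F. finite F \<and> F \<subseteq> \<Union>Q \<and> inj_on (\<lambda>A. A \<inter> F) Q"
proof -
  define witness where "witness A A' = (SOME x. x \<in> (A - A') \<union> (A' - A))" for A A' :: "'a set"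
  have witness: "witness A A' \<in> (A - A') \<union> (A' - A)" if "A \<noteq> A'" for A A'
    unfolding witness_def by (rule someI_ex) (use that in blast)
  define F where "F = \<Union>Q \<inter> (\<lambda>(A, A'). witness A A') ` (Q \<times> Q)"
  have "inj_on (\<lambda>A. A \<inter> F) Q"
  proof (rule inj_onI, rule ccontr)
    fix A A' assume "A \<in> Q" "A' \<in> Q" "A \<inter> F = A' \<inter> F" "A \<noteq> A'"
    moreover from this have "witness A A' \<in> F" using witness[of A A'] unfolding F_def by force
    ultimately show False using witness[of A A'] by blast
  qed
  moreover have "finite F" using assms unfolding F_def by blast
  ultimately show ?thesis unfolding F_def by blast
qed

definition finite_traces :: "'a set \<Rightarrow> ('a set \<times> 'a set set) set" where
  "finite_traces B = {(F, \<Phi>). finite F \<and> F \<subseteq> B \<and> \<Phi> \<subseteq> Pow F}"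

lemma finite_traces_lepoll:
  assumes "infinite B"
  shows "finite_traces B \<lesssim> B"
proof -
  have "finite_traces B \<subseteq> Fpow B \<times> Fpow (Fpow B)"
    by (auto simp: finite_traces_def Fpow_def intro: finite_subset)
  then have "finite_traces B \<lesssim> Fpow B \<times> Fpow (Fpow B)"
    by (rule subset_imp_lepoll)
  also have "Fpow B \<times> Fpow (Fpow B) \<approx> B \<times> B"
  proof (rule times_eqpoll_cong)
    show Fpow: "Fpow B \<approx> B" using assms by (rule eqpoll_Fpow)
    then have "infinite (Fpow B)" using assms eqpoll_finite_iff by blast
    then show "Fpow (Fpow B) \<approx> B" using Fpow eqpoll_Fpow eqpoll_trans by blast
  qed
  also have "B \<times> B \<approx> B"
    using assms card_of_Times_same_infinite eqpoll_iff_card_of_ordIso by blast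
  finally show ?thesis .
qed

lemma Pow_Pow_lepoll_ultrafilters_finite_traces:
  "Pow (Pow B) \<lesssim> ultrafilters (finite_traces B)"
proof (rule independent_family_ultrafilters_lepoll
    [where T = "\<lambda>A. {(F, \<Phi>) \<in> finite_traces B. A \<inter> F \<in> \<Phi>}"])
  fix P N assume "finite P" "finite N" "P \<subseteq> Pow B" "N \<subseteq> Pow B" "P \<inter> N = {}"
  obtain F where F: "finite F" "F \<subseteq> \<Union>(P \<union> N)" and inj: "inj_on (\<lambda>A. A \<inter> F) (P \<union> N)"
    using finite_set_separating_traces[of "P \<union> N"] \<open>finite P\<close> \<open>finite N\<close> by blast
  have "(F, (\<lambda>A. A \<inter> F) ` P) \<in> finite_traces B"
    using F \<open>P \<subseteq> Pow B\<close> \<open>N \<subseteq> Pow B\<close> unfolding finite_traces_def by blast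
  moreover have "A \<inter> F \<notin> (\<lambda>A. A \<inter> F) ` P" if "A \<in> N" for A
  proof
    assume "A \<inter> F \<in> (\<lambda>A. A \<inter> F) ` P"
    then obtain A' where "A' \<in> P" "A \<inter> F = A' \<inter> F" by blast
    then have "A = A'" using inj_onD[OF inj] \<open>A \<in> N\<close> by blast
    then show False using \<open>A' \<in> P\<close> \<open>A \<in> N\<close> \<open>P \<inter> N = {}\<close> by blast
  qed
  ultimately show "\<exists>y\<in>finite_traces B. (\<forall>A\<in>P. y \<in> {(F, \<Phi>) \<in> finite_traces B. A \<inter> F \<in> \<Phi>}) \<and>
      (\<forall>A\<in>N. y \<notin> {(F, \<Phi>) \<in> finite_traces B. A \<inter> F \<in> \<Phi>})"
    by blast
qed auto

definition image_ultrafilter :: "('a \<Rightarrow> 'b) \<Rightarrow> 'a set \<Rightarrow> 'b set \<Rightarrow> 'a set set \<Rightarrow> 'b set set" where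
  "image_ultrafilter g Y X U = {T \<in> Pow X. {y \<in> Y. g y \<in> T} \<in> U}"

lemma image_ultrafilter_in_ultrafilters:
  assumes "g ` Y \<subseteq> X" "U \<in> ultrafilters Y"
  shows "image_ultrafilter g Y X U \<in> ultrafilters X"
proof -
  let ?pre = "\<lambda>T. {y \<in> Y. g y \<in> T}"
  have U: "Y \<in> U" "{} \<notin> U" "\<And>S T. S \<in> U \<Longrightarrow> T \<in> U \<Longrightarrow> S \<inter> T \<in> U"
    "\<And>S T. S \<in> U \<Longrightarrow> T \<subseteq> Y \<Longrightarrow> S \<subseteq> T \<Longrightarrow> T \<in> U" "\<And>S. S \<subseteq> Y \<Longrightarrow> S \<in> U \<or> Y - S \<in> U"
    using assms(2) unfolding ultrafilters_def ultrafilter_on_def by blast+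
  have pre: "?pre X = Y" "?pre (S \<inter> T) = ?pre S \<inter> ?pre T" "?pre (X - S) = Y - ?pre S" for S T
    using assms(1) by auto
  have "ultrafilter_on X (Pow X) {T \<in> Pow X. ?pre T \<in> U}"
    unfolding ultrafilter_on_def
  proof (intro conjI ballI impI)
    show "{T \<in> Pow X. ?pre T \<in> U} \<subseteq> Pow X" by blast
    show "X \<in> {T \<in> Pow X. ?pre T \<in> U}" using U(1) pre(1) by simp
    show "{} \<notin> {T \<in> Pow X. ?pre T \<in> U}" using U(2) by simp
  next
    fix S T assume "S \<in> {T \<in> Pow X. ?pre T \<in> U}" "T \<in> {T \<in> Pow X. ?pre T \<in> U}"
    moreover from this have "?pre (S \<inter> T) \<in> U" unfolding pre(2) using U(3) by blast
    ultimately show "S \<inter> T \<in> {T \<in> Pow X. ?pre T \<in> U}" by blast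
  next
    fix S T assume "S \<in> {T \<in> Pow X. ?pre T \<in> U}" "T \<in> Pow X" "S \<subseteq> T"
    moreover from this have "?pre T \<in> U" using U(4)[of "?pre S" "?pre T"] by blast
    ultimately show "T \<in> {T \<in> Pow X. ?pre T \<in> U}" by blast
  next
    fix S assume "S \<in> Pow X"
    moreover have "?pre S \<in> U \<or> ?pre (X - S) \<in> U" unfolding pre(3) by (rule U(5)) blast
    ultimately show "S \<in> {T \<in> Pow X. ?pre T \<in> U} \<or> X - S \<in> {T \<in> Pow X. ?pre T \<in> U}" by blast
  qed
  then show ?thesis unfolding ultrafilters_def image_ultrafilter_def by simp
qed

lemma inj_on_image_ultrafilter:
  assumes "inj_on g Y" "g ` Y \<subseteq> X"
  shows "inj_on (image_ultrafilter g Y X) (ultrafilters Y)"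
proof (rule inj_onI)
  fix U V assume U: "U \<in> ultrafilters Y" and V: "V \<in> ultrafilters Y"
    and eq: "image_ultrafilter g Y X U = image_ultrafilter g Y X V"
  have mem: "T \<in> W \<longleftrightarrow> g ` T \<in> image_ultrafilter g Y X W" if "T \<subseteq> Y" for T W
  proof -
    have "{y \<in> Y. g y \<in> g ` T} = T" using assms(1) that by (auto dest: inj_onD)
    then show ?thesis using assms(2) that unfolding image_ultrafilter_def by auto
  qed
  have "T \<in> U \<longleftrightarrow> T \<in> V" if "T \<subseteq> Y" for T
    using mem[OF that, of U] mem[OF that, of V] eq by simp
  moreover have "U \<subseteq> Pow Y" "V \<subseteq> Pow Y"
    using U V by (simp_all add: ultrafilters_def ultrafilter_on_def)
  ultimately show "U = V" by (metis PowD subsetD subsetI subset_antisym)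
qed

lemma ultrafilters_lepoll_mono:
  assumes "Y \<lesssim> X"
  shows "ultrafilters Y \<lesssim> ultrafilters X"
proof -
  obtain g where g: "inj_on g Y" "g ` Y \<subseteq> X" using assms unfolding lepoll_def by blast
  have "inj_on (image_ultrafilter g Y X) (ultrafilters Y)" using g by (rule inj_on_image_ultrafilter)
  moreover have "image_ultrafilter g Y X ` ultrafilters Y \<subseteq> ultrafilters X"
    using image_ultrafilter_in_ultrafilters[OF g(2)] by blast
  ultimately show ?thesis unfolding lepoll_def by blast
qed

lemma ultrafilters_infinite_lepoll:
  assumes "infinite B"
  shows "Pow (Pow B) \<lesssim> ultrafilters B"
  using Pow_Pow_lepoll_ultrafilters_finite_traces ultrafilters_lepoll_mono[OF finite_traces_lepoll[OF assms]]
  by (rule lepoll_trans)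

lemma projection_empty_eq_pullback_empty:
  fixes i0 :: 'i
  assumes "local_representation B E L" "U \<in> ultrafilters ({i0} \<rightarrow>\<^sub>E B)"
  shows "projection B {} i0 U = pullback B E L {} \<eta>"
proof -
  have UL: "{} \<notin> U" "({i0} \<rightarrow>\<^sub>E B) \<in> U" "{} \<notin> L" "(E \<rightarrow>\<^sub>E B) \<in> L"
    using assms unfolding ultrafilters_def local_representation_def ultrafilter_on_def by blast+
  have "C \<in> projection B {} i0 U \<longleftrightarrow> C \<in> pullback B E L {} \<eta>" if "C \<in> cylinders ({} :: 'i set) B" for C
  proof -
    have "C = {} \<or> C = ({} \<rightarrow>\<^sub>E B)" using that unfolding cylinders_def by auto
    then show ?thesis
      using that UL unfolding projection_def pullback_def by (auto simp: restrict_def)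
  qed
  then show ?thesis unfolding projection_def pullback_def by blast
qed

lemma exact_rep_ultrafilters_lepoll:
  assumes "exact_rep B E L"
  shows "ultrafilters ({i0::nat} \<rightarrow>\<^sub>E B) \<lesssim> E"
proof (rule subset_image_lepoll)
  let ?\<eta> = "\<lambda>_. undefined :: 'e"
  have local: "local_representation B E L"
    using assms unfolding exact_rep_def by (rule conjunct1)
  have exact: "\<exists>e\<in>E. pullback B E L {i0} (?\<eta>(i0 := e)) = U"
    if "ultrafilter_on ({i0} \<rightarrow>\<^sub>E B) (Pow ({i0} \<rightarrow>\<^sub>E B)) U"
      "projection B {} i0 U = pullback B E L {} ?\<eta>" for U
    using assms[unfolded exact_rep_def, THEN conjunct2, THEN conjunct2, rule_format, of "{}" i0 ?\<eta> U]
      that by simp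
  show "ultrafilters ({i0} \<rightarrow>\<^sub>E B) \<subseteq> (\<lambda>e. pullback B E L {i0} (?\<eta>(i0 := e))) ` E"
  proof
    fix U assume U: "U \<in> ultrafilters ({i0} \<rightarrow>\<^sub>E B)"
    then have "\<exists>e\<in>E. pullback B E L {i0} (?\<eta>(i0 := e)) = U"
      by (intro exact projection_empty_eq_pullback_empty[OF local]) (simp_all add: ultrafilters_def)
    then show "U \<in> (\<lambda>e. pullback B E L {i0} (?\<eta>(i0 := e))) ` E" by (metis image_eqI)
  qed
qed

theorem mainTheorem10:
  fixes B :: "'b set" and E :: "'e set" and L :: "('e \<Rightarrow> 'b) set set"
  assumes "infinite B" and "exact_rep B E L"
  shows "\<exists>f. inj_on f (Pow (Pow B)) \<and> f ` Pow (Pow B) \<subseteq> E"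
proof -
  have "Pow (Pow B) \<lesssim> ultrafilters B"
    using assms(1) by (rule ultrafilters_infinite_lepoll)
  also have "\<dots> \<lesssim> ultrafilters ({0::nat} \<rightarrow>\<^sub>E B)"
    by (rule ultrafilters_lepoll_mono[OF eqpoll_imp_lepoll[OF eqpoll_sym[OF PiE_sing_eqpoll_self]]])
  also have "\<dots> \<lesssim> E"
    using assms(2) by (rule exact_rep_ultrafilters_lepoll)
  finally show ?thesis unfolding lepoll_def .
qed

end
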